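(* Let $n\geq 10$ be an integer and let $C_n$ be a set of $n$ points in the plane in general and convex position. Then $\mu(D(C_n))=\binom{n}{2}-5$.
   Context: A set of points in the plane is in general position if no three of its points are collinear, and in convex position if every point is a vertex of its convex hull. The disjointness graph of segments $D(P)$ is the graph whose vertices are all closed straight-line segments with both endpoints in $P$, two being adjacent if and only if they are disjoint. For a graph $G$ and $U\subseteq V(G)$, two distinct vertices $x,y\in U$ are $U$-mutually visible if $G$ contains a shortest $x$-$y$ path none of whose internal vertices lies in $U$; $U$ is a mutual-visibility set if every two distinct vertices of $U$ are $U$-mutually visible. The mutual-visibility number $\mu(G)$ is the maximum size of a mutual-visibility set of $G$. *)

theory Defs
  imports "HOL-Analysis.Analysis"
begin

definition general_position :: "(real^2) set \<Rightarrow> bool" where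
  "general_position P \<longleftrightarrow>
     (\<forall>a\<in>P. \<forall>b\<in>P. \<forall>c\<in>P. a \<noteq> b \<and> a \<noteq> c \<and> b \<noteq> c \<longrightarrow> \<not> collinear {a, b, c})"

definition convex_position :: "(real^2) set \<Rightarrow> bool" where
  "convex_position P \<longleftrightarrow> (\<forall>p\<in>P. p extreme_point_of (convex hull P))"

definition segments :: "(real^2) set \<Rightarrow> (real^2) set set" where
  "segments P = {closed_segment a b | a b. a \<in> P \<and> b \<in> P \<and> a \<noteq> b}"

definition disj_adj :: "(real^2) set \<Rightarrow> (real^2) set \<Rightarrow> bool" where
  "disj_adj s t \<longleftrightarrow> s \<inter> t = {}"

definition walk :: "'a set \<Rightarrow> ('a \<Rightarrow> 'a \<Rightarrow> bool) \<Rightarrow> 'a list \<Rightarrow> bool" where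
  "walk V E xs \<longleftrightarrow> xs \<noteq> [] \<and> set xs \<subseteq> V \<and>
     (\<forall>i. Suc i < length xs \<longrightarrow> E (xs ! i) (xs ! Suc i))"

definition shortest_path :: "'a set \<Rightarrow> ('a \<Rightarrow> 'a \<Rightarrow> bool) \<Rightarrow> 'a \<Rightarrow> 'a \<Rightarrow> 'a list \<Rightarrow> bool" where
  "shortest_path V E x y xs \<longleftrightarrow> walk V E xs \<and> hd xs = x \<and> last xs = y \<and>
     (\<forall>ys. walk V E ys \<and> hd ys = x \<and> last ys = y \<longrightarrow> length xs \<le> length ys)"

text \<open>Internal vertices of a path xs are those of butlast (tl xs).\<close>
definition mutually_visible :: "'a set \<Rightarrow> ('a \<Rightarrow> 'a \<Rightarrow> bool) \<Rightarrow> 'a set \<Rightarrow> 'a \<Rightarrow> 'a \<Rightarrow> bool" where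
  "mutually_visible V E U x y \<longleftrightarrow>
     (\<exists>xs. shortest_path V E x y xs \<and> set (butlast (tl xs)) \<inter> U = {})"

definition mv_set :: "'a set \<Rightarrow> ('a \<Rightarrow> 'a \<Rightarrow> bool) \<Rightarrow> 'a set \<Rightarrow> bool" where
  "mv_set V E U \<longleftrightarrow> U \<subseteq> V \<and>
     (\<forall>x\<in>U. \<forall>y\<in>U. x \<noteq> y \<longrightarrow> mutually_visible V E U x y)"

definition mv_number :: "'a set \<Rightarrow> ('a \<Rightarrow> 'a \<Rightarrow> bool) \<Rightarrow> nat" where
  "mv_number V E = Max {card U | U. mv_set V E U}"

end

theory Submission
  imports Defs
begin

(* Label the points of C as p_0, ..., p_(n-1) in their cyclic order along the convex hull.
   All other points lie strictly on one side of a hull edge, so a hull edge is disjoint from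
   every segment avoiding its two endpoints.  The five hull edges p_0p_1, p_2p_3, ..., p_8p_9
   are pairwise vertex-disjoint, so two intersecting segments, having at most four endpoints,
   always have one of them as a common neighbour in D(C); hence all other segments form a
   mutual-visibility set.
   Conversely, let at most four segments be removed.  A case analysis on the graph E formed by
   their endpoint pairs yields two intersecting remaining segments s and t such that every
   removed segment has an endpoint among those of s and t: either two diagonals of four points
   of C meeting every edge of E but spanning none (they cross by Radon's theorem), or two
   segments with a common endpoint.  Every common neighbour of s and t is then a remaining
   segment, so s and t are not mutually visible. *)

section \<open>Orientation in the plane\<close>

definition cross2 :: "real^2 \<Rightarrow> real^2 \<Rightarrow> real" where
  "cross2 x y = x$1 * y$2 - x$2 * y$1"

definition orient :: "real^2 \<Rightarrow> real^2 \<Rightarrow> real^2 \<Rightarrow> real" where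
  "orient a b c = cross2 (b - a) (c - a)"

lemma cross2_antisym: "cross2 y x = - cross2 x y"
  by (simp add: cross2_def)

lemma cross2_cramer: "cross2 x y *\<^sub>R z = cross2 z y *\<^sub>R x + cross2 x z *\<^sub>R y"
  by (simp add: cross2_def vec_eq_iff forall_2 algebra_simps)

lemma orient_swap: "orient b a c = - orient a b c"
  by (simp add: orient_def cross2_def algebra_simps)

lemma orient_rotate: "orient a b c = orient b c a"
  by (simp add: orient_def cross2_def algebra_simps)

lemma orient_affine_combination:
  "orient a b ((1 - s) *\<^sub>R c + s *\<^sub>R d) = (1 - s) * orient a b c + s * orient a b d"
  by (simp add: orient_def cross2_def algebra_simps)

lemma orient_on_line: "orient a b ((1 - s) *\<^sub>R a + s *\<^sub>R b) = 0"
  by (simp add: orient_def cross2_def algebra_simps)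

lemma collinear_if_orient_eq_0:
  assumes "orient a b c = 0" "a \<noteq> b"
  shows "collinear {a, b, c}"
proof -
  define x1 where "x1 = (b - a)$1"
  define x2 where "x2 = (b - a)$2"
  define y1 where "y1 = (c - a)$1"
  define y2 where "y2 = (c - a)$2"
  have "x1 * x1 + x2 * x2 = inner (b - a) (b - a)"
    unfolding x1_def x2_def by (simp add: inner_vec_def sum_2)
  also have "\<dots> \<noteq> 0" using assms(2) by simp
  finally have nz: "x1 * x1 + x2 * x2 \<noteq> 0" .
  have "x1 * y2 = x2 * y1"
    using assms(1) by (simp add: orient_def cross2_def x1_def x2_def y1_def y2_def)
  then have "(y1 * x1 + y2 * x2) * x1 = y1 * (x1 * x1 + x2 * x2)"
    "(y1 * x1 + y2 * x2) * x2 = y2 * (x1 * x1 + x2 * x2)"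
    by (simp_all add: algebra_simps)
  then have "y1 = ((y1 * x1 + y2 * x2) / (x1 * x1 + x2 * x2)) * x1"
    "y2 = ((y1 * x1 + y2 * x2) / (x1 * x1 + x2 * x2)) * x2"
    using nz by (simp_all add: divide_simps)
  then have "c - a = ((y1 * x1 + y2 * x2) / (x1 * x1 + x2 * x2)) *\<^sub>R (b - a)"
    unfolding vec_eq_iff forall_2 x1_def x2_def y1_def y2_def by simp
  then have "collinear {0, b - a, c - a}" using collinear_lemma by blast
  then show ?thesis using collinear_3[of b a c] by (simp add: insert_commute)
qed

lemma closed_segment_disjoint_if_same_side:
  assumes "0 < orient a b c" "0 < orient a b d"
  shows "closed_segment a b \<inter> closed_segment c d = {}"
proof -
  have pos: "0 < orient a b z" if z: "z \<in> closed_segment c d" for z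
  proof -
    obtain s where s: "0 \<le> s" "s \<le> 1" "z = (1 - s) *\<^sub>R c + s *\<^sub>R d"
      using z unfolding in_segment by blast
    have "0 < (1 - s) * orient a b c + s * orient a b d"
      using convex_bound_lt[of "- orient a b c" 0 "- orient a b d" "1 - s" s] assms s(1,2) by simp
    then show ?thesis unfolding s(3) orient_affine_combination .
  qed
  have zero: "orient a b z = 0" if z: "z \<in> closed_segment a b" for z
    using z orient_on_line unfolding in_segment by blast
  show ?thesis using pos zero by fastforce
qed

section \<open>Walks and mutual visibility\<close>

lemma walk_singleton_iff: "walk V E [a] \<longleftrightarrow> a \<in> V"
  unfolding walk_def by auto

lemma walk_Cons_Cons_iff: "walk V E (a # b # xs) \<longleftrightarrow> a \<in> V \<and> E a b \<and> walk V E (b # xs)"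
  unfolding walk_def by (auto simp: less_Suc_eq_0_disj)

lemma walk_length_ge_3:
  assumes "walk V E ys" "hd ys = s" "last ys = t" "s \<noteq> t" "\<not> E s t"
  shows "3 \<le> length ys"
proof -
  obtain a ys' where ys: "ys = a # ys'"
    using assms(1) by (cases ys) (auto simp: walk_def)
  obtain b ys'' where ys': "ys' = b # ys''"
    using assms(2-4) ys by (cases ys') auto
  have "E a b" using assms(1) ys ys' by (simp add: walk_Cons_Cons_iff)
  then have "ys'' \<noteq> []" using assms(2,3,5) ys ys' by auto
  then show ?thesis using ys ys' by (cases ys'') auto
qed

lemma shortest_path_length_le:
  assumes "shortest_path V E x y xs" "walk V E ys" "hd ys = x" "last ys = y"
  shows "length xs \<le> length ys"
  using assms by (simp add: shortest_path_def)

lemma shortest_path_edge: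
  assumes "s \<in> V" "t \<in> V" "s \<noteq> t" "E s t"
  shows "shortest_path V E s t [s, t]"
  unfolding shortest_path_def
proof (intro conjI allI impI)
  show "walk V E [s, t]" using assms by (simp add: walk_Cons_Cons_iff walk_singleton_iff)
  fix ys assume ys: "walk V E ys \<and> hd ys = s \<and> last ys = t"
  then have "ys \<noteq> []" "length ys \<noteq> 1" using assms(3) by (auto simp: walk_def length_Suc_conv)
  then show "length [s, t] \<le> length ys" by (cases ys) (auto simp: Suc_le_eq)
qed simp_all

lemma shortest_path_two_steps:
  assumes "s \<in> V" "w \<in> V" "t \<in> V" "E s w" "E w t" "s \<noteq> t" "\<not> E s t"
  shows "shortest_path V E s t [s, w, t]"
  unfolding shortest_path_def
proof (intro conjI allI impI)
  show "walk V E [s, w, t]" using assms by (simp add: walk_Cons_Cons_iff walk_singleton_iff)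
  fix ys assume "walk V E ys \<and> hd ys = s \<and> last ys = t"
  then show "length [s, w, t] \<le> length ys" using walk_length_ge_3 assms(6,7) by fastforce
qed simp_all

lemma mutually_visible_if_adjacent:
  assumes "s \<in> V" "t \<in> V" "s \<noteq> t" "E s t"
  shows "mutually_visible V E U s t"
  unfolding mutually_visible_def using shortest_path_edge[of s V t E] assms by fastforce

lemma mutually_visible_distance_two_iff:
  assumes "s \<in> V" "w \<in> V" "t \<in> V" "E s w" "E w t" "s \<noteq> t" "\<not> E s t"
  shows "mutually_visible V E U s t \<longleftrightarrow> (\<exists>w'\<in>V - U. E s w' \<and> E w' t)"
proof
  assume "mutually_visible V E U s t"
  then obtain xs where xs: "shortest_path V E s t xs" "set (butlast (tl xs)) \<inter> U = {}"
    unfolding mutually_visible_def by blast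
  have walk: "walk V E xs" "hd xs = s" "last xs = t"
    using xs(1) by (simp_all add: shortest_path_def)
  have walk3: "walk V E [s, w, t]" using assms by (simp add: walk_Cons_Cons_iff walk_singleton_iff)
  have "length xs \<le> length [s, w, t]" using shortest_path_length_le[OF xs(1) walk3] by simp
  moreover have "3 \<le> length xs" by (rule walk_length_ge_3[OF walk assms(6,7)])
  ultimately have "length xs = 3" by simp
  then obtain a w' c where "xs = [a, w', c]"
    by (metis length_0_conv length_Suc_conv numeral_3_eq_3)
  with xs(2) walk show "\<exists>w'\<in>V - U. E s w' \<and> E w' t"
    by (auto simp: walk_Cons_Cons_iff walk_singleton_iff)
next
  assume "\<exists>w'\<in>V - U. E s w' \<and> E w' t"
  then obtain w' where w': "w' \<in> V - U" "E s w'" "E w' t" by blast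
  then have "shortest_path V E s t [s, w', t]"
    using shortest_path_two_steps[of s V w' t E] assms(1,3,6,7) by blast
  then show "mutually_visible V E U s t"
    unfolding mutually_visible_def using w'(1) by (intro exI[of _ "[s, w', t]"]) auto
qed

lemma mv_number_eqI:
  assumes "finite V" "mv_set V E U" "\<And>U'. mv_set V E U' \<Longrightarrow> card U' \<le> card U"
  shows "mv_number V E = card U"
proof -
  have "{card U' | U'. mv_set V E U'} \<subseteq> card ` Pow V"
    by (auto simp: mv_set_def)
  then have "finite {card U' | U'. mv_set V E U'}"
    using assms(1) finite_surj by blast
  then show ?thesis
    unfolding mv_number_def using assms(2,3) by (intro Max_eqI) auto
qed

section \<open>Segments\<close>

lemma segments_eq_image: "segments P = (\<lambda>e. convex hull e) ` {e. e \<subseteq> P \<and> card e = 2}"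
  unfolding segments_def by (auto simp: segment_convex_hull card_2_iff)

lemma inj_on_convex_hull_doubletons:
  "inj_on (\<lambda>e. convex hull e) {e :: (real^2) set. card e = 2}"
  by (rule inj_onI) (auto simp: card_2_iff simp flip: segment_convex_hull)

lemma finite_segments: "finite P \<Longrightarrow> finite (segments P)"
  unfolding segments_eq_image by simp

lemma card_segments:
  assumes "finite P"
  shows "card (segments P) = card P choose 2"
proof -
  have "inj_on (\<lambda>e. convex hull e) {e. e \<subseteq> P \<and> card e = 2}"
    using inj_on_convex_hull_doubletons by (rule inj_on_subset) blast
  then show ?thesis
    unfolding segments_eq_image using n_subsets[OF assms] by (simp add: card_image)
qed

lemma crossing_segments_of_four_points:
  fixes H :: "(real^2) set"
  assumes "card H = 4" "\<And>x. x \<in> H \<Longrightarrow> x \<notin> convex hull (H - {x})"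
  obtains x y z w where "H = {x, y, z, w}" "distinct [x, y, z, w]"
    "closed_segment x y \<inter> closed_segment z w \<noteq> {}"
proof -
  have finH: "finite H" using assms(1) by (simp add: card_ge_0_finite)
  have "affine_dependent H" using affine_dependent_biggerset[OF finH] assms(1) by simp
  then obtain M P where MP: "M \<inter> P = {}" "M \<union> P = H" "convex hull M \<inter> convex hull P \<noteq> {}"
    using Radon_partition[OF finH] by blast
  have two_le: "2 \<le> card A"
    if "A \<union> B = H" "A \<inter> B = {}" "convex hull A \<inter> convex hull B \<noteq> {}" for A B
  proof (rule ccontr)
    assume "\<not> 2 \<le> card A"
    moreover have "finite A" using that(1) finH by auto
    moreover have "A \<noteq> {}" using that(3) by auto
    ultimately have "0 < card A" "card A < 2" by (simp_all add: card_gt_0_iff)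
    then have "card A = 1" by linarith
    then obtain x where A: "A = {x}" by (rule card_1_singletonE)
    then have "x \<in> convex hull B" using that(3) by simp
    moreover have "B \<subseteq> H - {x}" using that(1,2) A by blast
    ultimately have "x \<in> convex hull (H - {x})" using hull_mono by blast
    then show False using assms(2) that(1) A by blast
  qed
  have "2 \<le> card M" by (rule two_le[OF MP(2,1,3)])
  moreover have "2 \<le> card P" by (rule two_le[of P M]) (use MP in blast)+
  moreover have "finite M" "finite P" using finH MP(2) by (metis finite_Un)+
  then have "card M + card P = 4" using card_Un_disjoint[of M P] MP(1,2) assms(1) by simp
  ultimately have "card M = 2" "card P = 2" by linarith+
  then obtain x y z w where xyzw: "M = {x, y}" "x \<noteq> y" "P = {z, w}" "z \<noteq> w"
    by (meson card_2_iff)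
  have "H = {x, y, z, w}" using MP(2) xyzw by auto
  moreover have "distinct [x, y, z, w]" using MP(1) xyzw by auto
  moreover have "closed_segment x y \<inter> closed_segment z w \<noteq> {}"
    using MP(3) xyzw by (simp add: segment_convex_hull)
  ultimately show thesis by (rule that)
qed

section \<open>Convex polygons\<close>

locale convex_polygon =
  fixes C :: "(real^2) set"
  assumes finite_C: "finite C"
    and general_position_C: "general_position C"
    and convex_position_C: "convex_position C"
    and three_le_card_C: "3 \<le> card C"
begin

lemma not_in_convex_hull_others:
  assumes "x \<in> C" "S \<subseteq> C - {x}"
  shows "x \<notin> convex hull S"
proof
  assume x: "x \<in> convex hull S"
  have "x extreme_point_of (convex hull C)"
    using convex_position_C assms(1) by (simp add: convex_position_def)
  then have "convex (convex hull C - {x})"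
    using extreme_point_of_stillconvex[of "convex hull C" x] by simp
  moreover have "S \<subseteq> convex hull C - {x}" using assms(2) hull_subset[of C convex] by blast
  ultimately have "convex hull S \<subseteq> convex hull C - {x}" by (simp add: hull_minimal)
  then show False using x by blast
qed

lemma third_point:
  obtains c where "c \<in> C" "c \<noteq> a" "c \<noteq> b"
proof -
  have "\<not> C \<subseteq> {a, b}"
    using card_mono[of "{a, b}" C] card_length[of "[a, b]"] three_le_card_C by auto
  then show thesis using that by blast
qed

lemma orient_neq_0:
  assumes "a \<in> C" "b \<in> C" "c \<in> C" "a \<noteq> b" "a \<noteq> c" "b \<noteq> c"
  shows "orient a b c \<noteq> 0"
  using general_position_C assms collinear_if_orient_eq_0 unfolding general_position_def by blast

lemma exposing_direction:
  assumes "a \<in> C"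
  shows "\<exists>u. \<forall>c\<in>C - {a}. 0 < inner u (c - a)"
proof -
  have "a \<notin> convex hull (C - {a})" using not_in_convex_hull_others[OF assms] by blast
  moreover have "closed (convex hull (C - {a}))"
    using finite_C by (simp add: compact_imp_closed finite_imp_compact_convex_hull)
  ultimately obtain u k where "inner u a < k" "\<forall>x\<in>convex hull (C - {a}). k < inner u x"
    using separating_hyperplane_closed_point[of "convex hull (C - {a})" a] by auto
  then have "\<forall>c\<in>C - {a}. 0 < inner u (c - a)"
    using hull_subset[of "C - {a}" convex] by (fastforce simp: inner_diff_right)
  then show ?thesis by blast
qed

(* Rotating a line around a from the exposing direction u, the first point of C it meets is
   the successor of a on the hull boundary: it minimises the slope cross2 u (c - a) / u.(c - a). *)
lemma hull_successor_exists:
  assumes "a \<in> C"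
  shows "\<exists>b\<in>C - {a}. \<forall>c\<in>C - {a, b}. 0 < orient a b c"
proof -
  obtain u where u: "\<forall>c\<in>C - {a}. 0 < inner u (c - a)" using exposing_direction[OF assms] by blast
  define slope where "slope c = cross2 u (c - a) / inner u (c - a)" for c
  have ne: "C - {a} \<noteq> {}" using third_point[of a a] by blast
  define b where "b = arg_min_on slope (C - {a})"
  have b: "b \<in> C - {a}"
    unfolding b_def using arg_min_if_finite(1)[where f = slope and S = "C - {a}"] finite_C ne by blast
  have "0 < orient a b c" if c: "c \<in> C - {a, b}" for c
  proof -
    have pos: "0 < inner u (b - a)" "0 < inner u (c - a)" using u b c by auto
    then have "u \<noteq> 0" by auto
    have "slope b \<le> slope c"
      unfolding b_def using arg_min_least[where f = slope and S = "C - {a}"] finite_C ne c by blast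
    then have "cross2 u (b - a) * inner u (c - a) \<le> cross2 u (c - a) * inner u (b - a)"
      using pos by (simp add: slope_def divide_simps)
    moreover have "orient a b c * inner u u
        = cross2 u (c - a) * inner u (b - a) - cross2 u (b - a) * inner u (c - a)"
      using arg_cong[OF cross2_cramer[of "b - a" "c - a" u], of "inner u"]
      by (simp add: orient_def inner_add_right cross2_antisym[of u "b - a"] algebra_simps)
    ultimately have "0 \<le> orient a b c * inner u u" by simp
    moreover have "0 < inner u u" using \<open>u \<noteq> 0\<close> by simp
    ultimately have "0 \<le> orient a b c" by (simp add: zero_le_mult_iff)
    moreover have "orient a b c \<noteq> 0" using orient_neq_0 assms b c by blast
    ultimately show ?thesis by simp
  qed
  then show ?thesis using b by blast
qed

definition next_vertex :: "real^2 \<Rightarrow> real^2" where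
  "next_vertex a = (SOME b. b \<in> C - {a} \<and> (\<forall>c\<in>C - {a, b}. 0 < orient a b c))"

lemma
  assumes "a \<in> C"
  shows next_vertex_mem: "next_vertex a \<in> C"
    and next_vertex_neq: "next_vertex a \<noteq> a"
    and orient_next_vertex: "\<And>c. c \<in> C - {a, next_vertex a} \<Longrightarrow> 0 < orient a (next_vertex a) c"
proof -
  have "next_vertex a \<in> C - {a} \<and> (\<forall>c\<in>C - {a, next_vertex a}. 0 < orient a (next_vertex a) c)"
    unfolding next_vertex_def using someI_ex[OF hull_successor_exists[OF assms, unfolded Bex_def]] .
  then show "next_vertex a \<in> C" "next_vertex a \<noteq> a"
    "\<And>c. c \<in> C - {a, next_vertex a} \<Longrightarrow> 0 < orient a (next_vertex a) c"
    by auto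
qed

lemma inj_on_next_vertex: "inj_on next_vertex C"
proof (rule inj_onI, rule ccontr)
  fix a a' assume a: "a \<in> C" "a' \<in> C" "next_vertex a = next_vertex a'" "a \<noteq> a'"
  then have "a' \<in> C - {a, next_vertex a}" "a \<in> C - {a', next_vertex a'}"
    using next_vertex_neq[of a] next_vertex_neq[of a'] by auto
  then have "0 < orient a (next_vertex a) a'" "0 < orient a' (next_vertex a') a"
    using orient_next_vertex a(1,2) by blast+
  then show False
    using orient_swap[of "next_vertex a" a' a] orient_rotate[of a "next_vertex a" a'] a(3) by simp
qed

lemma next_vertex_next_vertex_neq:
  assumes "a \<in> C"
  shows "next_vertex (next_vertex a) \<noteq> a"
proof
  assume returns: "next_vertex (next_vertex a) = a"
  obtain c where c: "c \<in> C - {a, next_vertex a}" using third_point by blast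
  have "0 < orient a (next_vertex a) c" using orient_next_vertex[OF assms c] .
  moreover have "0 < orient (next_vertex a) a c"
    using orient_next_vertex[OF next_vertex_mem[OF assms], of c] c returns by auto
  ultimately show False using orient_swap[of "next_vertex a" a c] by simp
qed

(* The boundary is a single cycle.  Otherwise a closed orbit S misses some x in C; the point s0
   of S extreme in a direction u separating x from S has x strictly left of both boundary edges
   at s0, which the Cramer identity rules out. *)
lemma next_vertex_closed_subset_eq:
  assumes "S \<subseteq> C" "S \<noteq> {}" "next_vertex ` S \<subseteq> S"
  shows "S = C"
proof (rule ccontr)
  assume "S \<noteq> C"
  then obtain x where x: "x \<in> C" "x \<notin> S" using assms(1) by blast
  have finS: "finite S" using finite_subset[OF assms(1) finite_C] .
  have onto: "next_vertex ` S = S"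
    using endo_inj_surj[OF finS assms(3) inj_on_subset[OF inj_on_next_vertex assms(1)]] .
  have "x \<notin> convex hull S" using not_in_convex_hull_others x assms(1) by blast
  moreover have "closed (convex hull S)"
    using finS by (simp add: compact_imp_closed finite_imp_compact_convex_hull)
  ultimately obtain u k where uk: "inner u x < k" "\<forall>y\<in>convex hull S. k < inner u y"
    using separating_hyperplane_closed_point[of "convex hull S" x] by auto
  define s0 where "s0 = arg_min_on (inner u) S"
  have s0: "s0 \<in> S"
    unfolding s0_def using arg_min_if_finite(1)[where f = "inner u"] finS assms(2) by blast
  have s0_min: "inner u s0 \<le> inner u y" if "y \<in> S" for y
    unfolding s0_def using arg_min_least[where f = "inner u"] finS assms(2) that by blast
  define s1 where "s1 = next_vertex s0"
  obtain p where p: "p \<in> S" "next_vertex p = s0" using onto s0 by (metis imageE)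
  have C3: "s0 \<in> C" "s1 \<in> C" "p \<in> C" "s1 \<in> S"
    using assms(1,3) s0 p(1) next_vertex_mem unfolding s1_def by auto
  have "p \<noteq> s0" "p \<noteq> s1"
    using next_vertex_neq[OF C3(3)] next_vertex_next_vertex_neq[OF C3(3)] p(2)
    unfolding s1_def by auto
  moreover have "x \<noteq> s0" "x \<noteq> s1" "x \<noteq> p" using x s0 C3 p by auto
  ultimately have "0 < orient s0 s1 x" "0 < orient s0 s1 p" "0 < orient p s0 x"
    using orient_next_vertex[OF C3(1)] orient_next_vertex[OF C3(3)] C3 x p(2)
    unfolding s1_def by auto
  then have o: "0 < orient s0 s1 x" "0 < orient s0 s1 p" "0 < orient s0 x p"
    using orient_rotate[of p s0 x] by simp_all
  have "orient s0 s1 p * inner u (x - s0)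
      = orient s0 x p * inner u (s1 - s0) + orient s0 s1 x * inner u (p - s0)"
    using arg_cong[OF cross2_cramer[of "s1 - s0" "p - s0" "x - s0"], of "inner u"]
    by (simp add: orient_def inner_add_right)
  moreover have "inner u (x - s0) < 0"
    using uk s0 hull_subset[of S convex] by (fastforce simp: inner_diff_right)
  moreover have "0 \<le> inner u (s1 - s0)" "0 \<le> inner u (p - s0)"
    using s0_min C3(4) p(1) by (auto simp: inner_diff_right)
  ultimately show False
    using o by (smt (verit) mult_nonneg_nonneg mult_pos_neg)
qed

definition hull_vertex :: "nat \<Rightarrow> real^2" where
  "hull_vertex k = (next_vertex ^^ k) (SOME a. a \<in> C)"

lemma hull_vertex_Suc: "hull_vertex (Suc k) = next_vertex (hull_vertex k)"
  by (simp add: hull_vertex_def)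

lemma hull_vertex_mem: "hull_vertex k \<in> C"
proof (induction k)
  case 0
  have "C \<noteq> {}" using three_le_card_C by auto
  then show ?case by (simp add: hull_vertex_def some_in_eq)
next
  case (Suc k)
  then show ?case by (simp add: hull_vertex_Suc next_vertex_mem)
qed

lemma inj_on_hull_vertex: "inj_on hull_vertex {..<card C}"
proof -
  have neq: "hull_vertex i \<noteq> hull_vertex j" if ij: "i < j" "j < card C" for i j
  proof
    assume eq: "hull_vertex i = hull_vertex j"
    define S where "S = hull_vertex ` {i..<j}"
    have "next_vertex ` S \<subseteq> S"
    proof
      fix y assume "y \<in> next_vertex ` S"
      then obtain k where k: "i \<le> k" "k < j" "y = hull_vertex (Suc k)"
        unfolding S_def by (auto simp: hull_vertex_Suc)
      show "y \<in> S"
      proof (cases "Suc k < j")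
        case True
        then show ?thesis using k unfolding S_def by auto
      next
        case False
        then have "Suc k = j" using k(2) Suc_lessI by blast
        then have "y = hull_vertex i" using k(3) eq by simp
        then show ?thesis using ij unfolding S_def by auto
      qed
    qed
    moreover have "S \<subseteq> C" "S \<noteq> {}" using hull_vertex_mem ij unfolding S_def by auto
    ultimately have "S = C" using next_vertex_closed_subset_eq by blast
    moreover have "card S \<le> j - i" unfolding S_def using card_image_le[of "{i..<j}" hull_vertex] by simp
    ultimately show False using ij by simp
  qed
  show ?thesis
  proof (rule inj_onI, rule ccontr)
    fix i j assume "i \<in> {..<card C}" "j \<in> {..<card C}" "hull_vertex i = hull_vertex j" "i \<noteq> j"
    then show False using neq[of i j] neq[of j i] by (auto simp: neq_iff)
  qed
qed

lemma disjoint_boundary_edge: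
  assumes "a \<in> C" "c \<in> C - {a, next_vertex a}" "d \<in> C - {a, next_vertex a}"
  shows "closed_segment a (next_vertex a) \<inter> closed_segment c d = {}"
  using orient_next_vertex[OF assms(1,2)] orient_next_vertex[OF assms(1,3)]
  by (rule closed_segment_disjoint_if_same_side)

end

section \<open>Sets of at most four edges\<close>

definition independent_transversal :: "'a set set \<Rightarrow> 'a set \<Rightarrow> bool" where
  "independent_transversal E H \<longleftrightarrow> (\<forall>e\<in>E. e \<inter> H \<noteq> {} \<and> \<not> e \<subseteq> H)"

definition wedge_transversal :: "'a set set \<Rightarrow> 'a \<Rightarrow> 'a \<Rightarrow> 'a \<Rightarrow> bool" where
  "wedge_transversal E p a b \<longleftrightarrow>
     distinct [p, a, b] \<and> {p, a} \<notin> E \<and> {p, b} \<notin> E \<and> (\<forall>e\<in>E. e \<inter> {p, a, b} \<noteq> {})"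

locale few_edges =
  fixes C :: "'a set" and E :: "'a set set"
  assumes finite_C: "finite C"
    and ten_le_card_C: "10 \<le> card C"
    and card_E: "card E \<le> 4"
    and edge: "\<And>e. e \<in> E \<Longrightarrow> e \<subseteq> C \<and> card e = 2"
begin

lemma finite_E: "finite E"
proof -
  have "E \<subseteq> Pow C" using edge by blast
  then show ?thesis using finite_C finite_subset by blast
qed

lemma Union_E_subset: "\<Union>E \<subseteq> C"
  using edge by blast

lemma finite_Union_E: "finite (\<Union>E)"
  using finite_subset[OF Union_E_subset finite_C] .

lemma card_Union_E: "card (\<Union>E) \<le> 2 * card E"
proof -
  have "card (\<Union>E) \<le> (\<Sum>e\<in>E. card e)" by (rule card_Union_le_sum_card)
  also have "\<dots> = (\<Sum>e\<in>E. 2)" using edge by (intro sum.cong) simp_all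
  finally show ?thesis by simp
qed

lemma exists_fresh:
  assumes "finite X" "card X < 10"
  shows "\<exists>p\<in>C. p \<notin> X"
proof (rule ccontr)
  assume "\<not> ?thesis"
  then have "card C \<le> card X" using card_mono[OF assms(1)] by blast
  then show False using assms(2) ten_le_card_C by linarith
qed

lemma doubleton_edge_neq: "{a, b} \<in> E \<Longrightarrow> a \<noteq> b"
  using edge by fastforce

lemma edge_through:
  assumes "e \<in> E" "v \<in> e"
  obtains x where "e = {v, x}" "x \<noteq> v"
proof -
  obtain a b where "e = {a, b}" "a \<noteq> b" using edge[OF assms(1)] by (meson card_2_iff)
  then show thesis using that assms(2) by (auto simp: insert_commute)
qed

lemma edge_not_within_doubleton:
  assumes "e \<in> E" "e \<noteq> {x, y}"
  shows "\<exists>a\<in>e. a \<notin> {x, y}"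
proof (rule ccontr)
  assume "\<not> ?thesis"
  then have "e \<subseteq> {x, y}" by blast
  then have "e = {x, y}" using card_seteq[of "{x, y}" e] edge[OF assms(1)] card_length[of "[x, y]"] by simp
  then show False using assms(2) by simp
qed

lemma matching_independent_transversal:
  assumes "\<And>e e'. e \<in> E \<Longrightarrow> e' \<in> E \<Longrightarrow> e \<noteq> e' \<Longrightarrow> e \<inter> e' = {}"
  shows "\<exists>H\<subseteq>C. card H = 4 \<and> independent_transversal E H"
proof -
  define f where "f e = (SOME x. x \<in> e)" for e :: "'a set"
  have f: "f e \<in> e" if "e \<in> E" for e
  proof -
    have "e \<noteq> {}" using edge[OF that] by auto
    then show ?thesis by (simp add: f_def some_in_eq)
  qed
  have f_eq: "e = e'" if "e \<in> E" "e' \<in> E" "f e \<in> e'" for e e'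
    using assms[OF that(1,2)] f[OF that(1)] that(3) by blast
  have "inj_on f E"
    by (rule inj_onI) (metis f f_eq)
  then have card_fE: "card (f ` E) = card E" by (simp add: card_image)
  have "4 - card E \<le> card (C - \<Union>E)"
    using diff_card_le_card_Diff[OF finite_Union_E, of C] card_Union_E ten_le_card_C card_E by linarith
  then obtain G where G: "G \<subseteq> C - \<Union>E" "card G = 4 - card E"
    by (meson obtain_subset_with_card_n)
  define H where "H = f ` E \<union> G"
  have fE: "f ` E \<subseteq> \<Union>E" using f by blast
  have "finite G" using G(1) finite_C finite_subset by blast
  moreover have "f ` E \<inter> G = {}" using fE G(1) by blast
  ultimately have "card H = card E + (4 - card E)"
    unfolding H_def using card_Un_disjoint[of "f ` E" G] finite_E card_fE G(2) by simp
  then have "card H = 4" using card_E by simp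
  moreover have "H \<subseteq> C"
    unfolding H_def using order_trans[OF fE Union_E_subset] order_trans[OF G(1) Diff_subset]
    by (rule Un_least)
  moreover have "e \<inter> H \<noteq> {}" if "e \<in> E" for e
    using f[OF that] that unfolding H_def by blast
  moreover have "\<not> e \<subseteq> H" if e: "e \<in> E" for e
  proof
    assume "e \<subseteq> H"
    then have sub: "e \<subseteq> f ` E" using G(1) e unfolding H_def by blast
    obtain x y where xy: "e = {x, y}" "x \<noteq> y" using edge[OF e] by (meson card_2_iff)
    then obtain ex ey where exy: "ex \<in> E" "ey \<in> E" "x = f ex" "y = f ey" using sub by blast
    have "ex = e" by (rule f_eq[OF exy(1) e]) (simp add: xy(1) flip: exy(3))
    moreover have "ey = e" by (rule f_eq[OF exy(2) e]) (simp add: xy(1) flip: exy(4))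
    ultimately have "x = y" using exy(3,4) by simp
    then show False using xy(2) by contradiction
  qed
  ultimately show ?thesis unfolding independent_transversal_def by blast
qed

lemma pair_cover_wedge_transversal:
  assumes "v \<in> \<Union>E" "u \<in> C" "u \<noteq> v" "\<And>e. e \<in> E \<Longrightarrow> v \<in> e \<or> u \<in> e"
  shows "\<exists>p\<in>C. wedge_transversal E p v u"
proof -
  have "card (insert u (\<Union>E)) < 10"
    using card_Union_E card_E finite_Union_E by (simp add: card_insert_if)
  then obtain p where p: "p \<in> C" "p \<notin> insert u (\<Union>E)"
    using exists_fresh finite_Union_E by blast
  then have "wedge_transversal E p v u"
    using assms unfolding wedge_transversal_def by auto
  then show ?thesis using p(1) by blast
qed

lemma fork_remaining_edges:
  assumes "{v, x} \<in> E" "{v, y} \<in> E" "x \<noteq> y"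
    and no_cover: "\<And>u. u \<in> C \<Longrightarrow> u \<noteq> v \<Longrightarrow> \<exists>e\<in>E. v \<notin> e \<and> u \<notin> e"
  obtains r1 r2 where "E = {{v, x}, {v, y}, r1, r2}" "r1 \<inter> r2 = {}" "v \<notin> r1" "v \<notin> r2"
proof -
  have "x \<in> C" "x \<noteq> v" using edge[OF assms(1)] by (auto simp: card_2_iff)
  then obtain r1 where r1: "r1 \<in> E" "v \<notin> r1" using no_cover by blast
  obtain u where u: "u \<in> r1" using edge[OF r1(1)] by fastforce
  then obtain r2 where r2: "r2 \<in> E" "v \<notin> r2" "u \<notin> r2"
    using no_cover edge r1 by blast
  have "{v, x} \<noteq> {v, y}" "{v, x} \<noteq> r1" "{v, x} \<noteq> r2" "{v, y} \<noteq> r1" "{v, y} \<noteq> r2" "r1 \<noteq> r2"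
    using assms(3) r1(2) r2(2,3) u by (auto simp: doubleton_eq_iff)
  then have four: "card {{v, x}, {v, y}, r1, r2} = 4" by simp
  have sub: "{{v, x}, {v, y}, r1, r2} \<subseteq> E" using assms(1,2) r1 r2 by blast
  then have "card {{v, x}, {v, y}, r1, r2} = card E" using card_mono[OF finite_E sub] four card_E by simp
  then have E_eq: "E = {{v, x}, {v, y}, r1, r2}" using card_subset_eq[OF finite_E sub] by simp
  have "w \<notin> r2" if w: "w \<in> r1" for w
  proof -
    have "w \<in> C" "w \<noteq> v" using w edge r1 by auto
    then obtain e where "e \<in> E" "v \<notin> e" "w \<notin> e" using no_cover by blast
    then have "e = r2" using E_eq w by auto
    then show ?thesis using \<open>w \<notin> e\<close> by simp
  qed
  then have "r1 \<inter> r2 = {}" by blast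
  then show thesis using E_eq r1(2) r2(2) that by blast
qed

lemma triangle_wedge_transversal:
  assumes E: "E = {{v, x}, {v, y}, {x, y}, r}" and r: "r \<inter> {x, y} = {}" "v \<notin> r"
  shows "\<exists>p a b. {p, a, b} \<subseteq> C \<and> wedge_transversal E p a b"
proof -
  have "{v, x} \<in> E" "{v, y} \<in> E" "{x, y} \<in> E" "r \<in> E" by (simp_all add: E)
  then have vxy: "v \<noteq> x" "v \<noteq> y" "x \<noteq> y" "{x, y} \<subseteq> C" and r_edge: "r \<subseteq> C" "card r = 2"
    using doubleton_edge_neq edge by blast+
  then obtain p where p: "p \<in> r" by (metis card.empty ex_in_conv zero_neq_numeral)
  have "p \<in> C" "p \<noteq> x" "p \<noteq> y" "p \<noteq> v" "x \<notin> r" "y \<notin> r" using r r_edge(1) p by auto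
  then have "{p, x} \<noteq> r" "{p, y} \<noteq> r" by auto
  then have "wedge_transversal E p x y"
    using \<open>p \<noteq> x\<close> \<open>p \<noteq> y\<close> \<open>p \<noteq> v\<close> vxy p
    unfolding wedge_transversal_def E by (auto simp: doubleton_eq_iff)
  then show ?thesis using \<open>p \<in> C\<close> vxy(4) by blast
qed

lemma fork_matching_independent_transversal:
  assumes E: "E = {{v, x}, {v, y}, r1, r2}" and r: "r1 \<inter> r2 = {}" "v \<notin> r1" "v \<notin> r2"
    and xy: "r1 \<noteq> {x, y}" "r2 \<noteq> {x, y}"
  shows "\<exists>H\<subseteq>C. card H = 4 \<and> independent_transversal E H"
proof -
  have vx: "{v, x} \<in> E" and vy: "{v, y} \<in> E" and r12: "r1 \<in> E" "r2 \<in> E" by (simp_all add: E)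
  then have vxy: "v \<noteq> x" "v \<noteq> y" "v \<in> C" using doubleton_edge_neq edge by blast+
  have vxy_used: "v \<in> \<Union>E" "x \<in> \<Union>E" "y \<in> \<Union>E" using vx vy by blast+
  obtain a1 a2 where a: "a1 \<in> r1" "a1 \<notin> {x, y}" "a2 \<in> r2" "a2 \<notin> {x, y}"
    using edge_not_within_doubleton[OF r12(1) xy(1)] edge_not_within_doubleton[OF r12(2) xy(2)] by blast
  obtain b1 where b1: "r1 = {a1, b1}" "b1 \<noteq> a1" by (rule edge_through[OF r12(1) a(1)])
  obtain b2 where b2: "r2 = {a2, b2}" "b2 \<noteq> a2" by (rule edge_through[OF r12(2) a(3)])
  have "card (\<Union>E) < 10" using card_Union_E card_E by linarith
  then obtain f where f: "f \<in> C" "f \<notin> \<Union>E" using exists_fresh finite_Union_E by blast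
  have "r1 \<subseteq> \<Union>E" "r2 \<subseteq> \<Union>E" using r12 by auto
  then have f_neq: "f \<noteq> v" "f \<noteq> x" "f \<noteq> y" "f \<noteq> a1" "f \<noteq> b1" "f \<noteq> a2" "f \<noteq> b2"
    using f(2) vxy_used b1(1) b2(1) by auto
  have ab_neq: "a1 \<noteq> v" "a2 \<noteq> v" "a1 \<noteq> a2" "b1 \<noteq> a2" "b2 \<noteq> a1" "b1 \<noteq> v" "b2 \<noteq> v"
    using r b1(1) b2(1) by auto
  define H where "H = {v, a1, a2, f}"
  have "card H = 4" using f_neq ab_neq unfolding H_def by (auto simp: card_insert_if)
  moreover have "H \<subseteq> C"
    using vxy(3) f(1) a(1,3) edge[OF r12(1)] edge[OF r12(2)] unfolding H_def by blast
  moreover have "v \<in> H" "a1 \<in> H" "a2 \<in> H" by (simp_all add: H_def)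
  moreover have "x \<notin> H" "y \<notin> H" "b1 \<notin> H" "b2 \<notin> H"
    using vxy(1,2) f_neq a(2,4) ab_neq b1(2) b2(2) unfolding H_def by auto
  ultimately show ?thesis
    unfolding independent_transversal_def E b1(1) b2(1) by blast
qed

lemma fork_cases:
  assumes "{v, x} \<in> E" "{v, y} \<in> E" "x \<noteq> y"
    and "\<And>u. u \<in> C \<Longrightarrow> u \<noteq> v \<Longrightarrow> \<exists>e\<in>E. v \<notin> e \<and> u \<notin> e"
  shows "(\<exists>H\<subseteq>C. card H = 4 \<and> independent_transversal E H)
    \<or> (\<exists>p a b. {p, a, b} \<subseteq> C \<and> wedge_transversal E p a b)"
proof -
  obtain r1 r2 where r: "E = {{v, x}, {v, y}, r1, r2}" "r1 \<inter> r2 = {}" "v \<notin> r1" "v \<notin> r2"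
    by (rule fork_remaining_edges[OF assms])
  consider "r1 = {x, y}" | "r2 = {x, y}" | "r1 \<noteq> {x, y}" "r2 \<noteq> {x, y}" by blast
  then show ?thesis
  proof cases
    case 1
    then have "E = {{v, x}, {v, y}, {x, y}, r2}" "r2 \<inter> {x, y} = {}" using r(1,2) by auto
    from triangle_wedge_transversal[OF this r(4)] show ?thesis by (rule disjI2)
  next
    case 2
    then have "E = {{v, x}, {v, y}, {x, y}, r1}" "r1 \<inter> {x, y} = {}" using r(1,2) by auto
    from triangle_wedge_transversal[OF this r(3)] show ?thesis by (rule disjI2)
  next
    case 3
    from fork_matching_independent_transversal[OF r 3] show ?thesis by (rule disjI1)
  qed
qed

lemma transversal_cases:
  "(\<exists>H\<subseteq>C. card H = 4 \<and> independent_transversal E H)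
    \<or> (\<exists>p a b. {p, a, b} \<subseteq> C \<and> wedge_transversal E p a b)"
proof (cases "\<forall>e\<in>E. \<forall>e'\<in>E. e \<noteq> e' \<longrightarrow> e \<inter> e' = {}")
  case True
  then have "\<exists>H\<subseteq>C. card H = 4 \<and> independent_transversal E H"
    by (intro matching_independent_transversal) blast
  then show ?thesis ..
next
  case False
  then obtain e e' v where e: "e \<in> E" "e' \<in> E" "e \<noteq> e'" "v \<in> e" "v \<in> e'" by blast
  obtain x where x: "e = {v, x}" "x \<noteq> v" by (rule edge_through[OF e(1,4)])
  obtain y where y: "e' = {v, y}" "y \<noteq> v" by (rule edge_through[OF e(2,5)])
  have xE: "{v, x} \<in> E" and yE: "{v, y} \<in> E" using e(1,2) x(1) y(1) by simp_all
  have "x \<noteq> y" using x(1) y(1) e(3) by blast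
  show ?thesis
  proof (cases "\<exists>u\<in>C. u \<noteq> v \<and> (\<forall>e\<in>E. v \<in> e \<or> u \<in> e)")
    case True
    then obtain u where u: "u \<in> C" "u \<noteq> v" "\<forall>e\<in>E. v \<in> e \<or> u \<in> e" by blast
    have "v \<in> \<Union>E" "v \<in> C" using e(1,4) edge[OF e(1)] by auto
    then obtain p where "p \<in> C" "wedge_transversal E p v u"
      using pair_cover_wedge_transversal[of v u] u by blast
    then have "{p, v, u} \<subseteq> C \<and> wedge_transversal E p v u" using u(1) \<open>v \<in> C\<close> by blast
    then show ?thesis by blast
  next
    case False
    then have "\<And>u. u \<in> C \<Longrightarrow> u \<noteq> v \<Longrightarrow> \<exists>e\<in>E. v \<notin> e \<and> u \<notin> e" by blast
    then show ?thesis by (rule fork_cases[OF xE yE \<open>x \<noteq> y\<close>])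
  qed
qed

end

section \<open>The mutual-visibility number\<close>

lemma pair_avoiding_small_set:
  assumes "inj_on f {..<2 * m}" "finite K" "card K < m"
  shows "\<exists>i<m. f (2 * i) \<notin> K \<and> f (2 * i + 1) \<notin> K"
proof (rule ccontr)
  assume "\<not> ?thesis"
  then have "\<exists>k. k \<in> K \<and> (k = f (2 * i) \<or> k = f (2 * i + 1))" if "i < m" for i
    using that by blast
  then obtain g where g: "\<And>i. i < m \<Longrightarrow> g i \<in> K \<and> (g i = f (2 * i) \<or> g i = f (2 * i + 1))"
    by metis
  have "inj_on g {..<m}"
  proof (rule inj_onI)
    fix i j assume ij: "i \<in> {..<m}" "j \<in> {..<m}" "g i = g j"
    have "\<exists>p\<in>{2 * i, 2 * i + 1}. \<exists>q\<in>{2 * j, 2 * j + 1}. f p = f q"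
      using g[of i] g[of j] ij by auto
    then obtain p q where pq: "p \<in> {2 * i, 2 * i + 1}" "q \<in> {2 * j, 2 * j + 1}" "f p = f q"
      by blast
    moreover have "p \<in> {..<2 * m}" "q \<in> {..<2 * m}" using pq(1,2) ij(1,2) by auto
    ultimately have "p = q" using inj_onD[OF assms(1)] by blast
    then show "i = j" using pq(1,2) by auto
  qed
  moreover have "g ` {..<m} \<subseteq> K" using g by blast
  ultimately have "card {..<m} \<le> card K" using card_inj_on_le assms(2) by blast
  then show False using assms(3) by simp
qed

locale large_convex_polygon = convex_polygon +
  assumes ten_le_card_C: "10 \<le> card C"
begin

definition boundary_matching :: "(real^2) set set" where
  "boundary_matching = (\<lambda>i. closed_segment (hull_vertex (2 * i)) (hull_vertex (2 * i + 1))) ` {..<5}"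

lemma inj_on_hull_vertex_10: "inj_on hull_vertex {..<10}"
  by (rule inj_on_subset[OF inj_on_hull_vertex]) (use ten_le_card_C in auto)

lemma hull_vertex_pair_neq: "i < 5 \<Longrightarrow> hull_vertex (2 * i) \<noteq> hull_vertex (2 * i + 1)"
  using inj_onD[OF inj_on_hull_vertex_10, of "2 * i" "2 * i + 1"] by auto

lemma boundary_matching_subset: "boundary_matching \<subseteq> segments C"
proof
  fix h assume "h \<in> boundary_matching"
  then obtain i where i: "i < 5" "h = closed_segment (hull_vertex (2 * i)) (hull_vertex (2 * i + 1))"
    unfolding boundary_matching_def by blast
  then show "h \<in> segments C"
    unfolding segments_def using hull_vertex_mem hull_vertex_pair_neq[OF i(1)] by blast
qed

lemma card_boundary_matching: "card boundary_matching = 5"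
proof -
  have "inj_on (\<lambda>i. closed_segment (hull_vertex (2 * i)) (hull_vertex (2 * i + 1))) {..<5}"
  proof (rule inj_onI)
    fix i j :: nat assume ij: "i \<in> {..<5}" "j \<in> {..<5}"
      and "closed_segment (hull_vertex (2 * i)) (hull_vertex (2 * i + 1))
         = closed_segment (hull_vertex (2 * j)) (hull_vertex (2 * j + 1))"
    then have "hull_vertex (2 * i) = hull_vertex (2 * j) \<or> hull_vertex (2 * i) = hull_vertex (2 * j + 1)"
      by (auto simp: closed_segment_eq doubleton_eq_iff)
    moreover have "2 * i \<in> {..<10}" "2 * j \<in> {..<10}" "2 * j + 1 \<in> {..<10}" using ij by auto
    ultimately have "2 * i = 2 * j \<or> 2 * i = 2 * j + 1"
      using inj_onD[OF inj_on_hull_vertex_10] by blast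
    then show "i = j" by presburger
  qed
  then show ?thesis unfolding boundary_matching_def by (simp add: card_image)
qed

lemma boundary_matching_avoids:
  assumes "{a, b, c, d} \<subseteq> C"
  shows "\<exists>h\<in>boundary_matching. h \<inter> closed_segment a b = {} \<and> h \<inter> closed_segment c d = {}"
proof -
  have "inj_on hull_vertex {..<2 * 5}" using inj_on_hull_vertex_10 by simp
  moreover have "card {a, b, c, d} < 5" using card_length[of "[a, b, c, d]"] by simp
  ultimately obtain i where i: "i < 5" "hull_vertex (2 * i) \<notin> {a, b, c, d}"
    "hull_vertex (2 * i + 1) \<notin> {a, b, c, d}"
    using pair_avoiding_small_set[of hull_vertex 5 "{a, b, c, d}"] by blast
  let ?p = "hull_vertex (2 * i)"
  have p: "?p \<in> C" "next_vertex ?p = hull_vertex (2 * i + 1)"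
    by (simp_all add: hull_vertex_mem hull_vertex_Suc)
  have "a \<in> C - {?p, next_vertex ?p}" "b \<in> C - {?p, next_vertex ?p}"
    "c \<in> C - {?p, next_vertex ?p}" "d \<in> C - {?p, next_vertex ?p}"
    using assms i(2,3) p(2) by auto
  then have "closed_segment ?p (next_vertex ?p) \<inter> closed_segment a b = {}"
    "closed_segment ?p (next_vertex ?p) \<inter> closed_segment c d = {}"
    using disjoint_boundary_edge[OF p(1)] by blast+
  moreover have "closed_segment ?p (next_vertex ?p) \<in> boundary_matching"
    unfolding boundary_matching_def p(2) using i(1) by blast
  ultimately show ?thesis by blast
qed

lemma mv_set_segments_minus_boundary_matching:
  "mv_set (segments C) disj_adj (segments C - boundary_matching)"
  unfolding mv_set_def
proof (intro conjI ballI impI)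
  fix s t assume s: "s \<in> segments C - boundary_matching" and t: "t \<in> segments C - boundary_matching"
    and "s \<noteq> t"
  obtain a b c d where abcd: "s = closed_segment a b" "t = closed_segment c d" "{a, b, c, d} \<subseteq> C"
    using s t unfolding segments_def by blast
  show "mutually_visible (segments C) disj_adj (segments C - boundary_matching) s t"
  proof (cases "disj_adj s t")
    case True
    show ?thesis by (rule mutually_visible_if_adjacent) (use s t \<open>s \<noteq> t\<close> True in auto)
  next
    case False
    obtain h where h: "h \<in> boundary_matching" "h \<inter> s = {}" "h \<inter> t = {}"
      using boundary_matching_avoids[OF abcd(3)] abcd(1,2) by blast
    then have adj: "disj_adj s h" "disj_adj h t" by (auto simp: disj_adj_def)
    have hV: "h \<in> segments C" using h(1) boundary_matching_subset by blast
    show ?thesis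
    proof (rule mutually_visible_distance_two_iff[of s _ h, THEN iffD2])
      show "s \<in> segments C" "t \<in> segments C" using s t by simp_all
      show "\<exists>w\<in>segments C - (segments C - boundary_matching). disj_adj s w \<and> disj_adj w t"
        using h(1) hV adj by blast
    qed (use hV adj \<open>s \<noteq> t\<close> False in auto)
  qed
qed simp

lemma not_mutually_visible_if_endpoints_block:
  assumes "{a, b, c, d} \<subseteq> C" "a \<noteq> b" "c \<noteq> d" "closed_segment a b \<noteq> closed_segment c d"
    and "closed_segment a b \<inter> closed_segment c d \<noteq> {}"
    and "\<And>w. w \<in> segments C - U \<Longrightarrow> w \<inter> {a, b, c, d} \<noteq> {}"
  shows "\<not> mutually_visible (segments C) disj_adj U (closed_segment a b) (closed_segment c d)"
proof
  let ?s = "closed_segment a b" and ?t = "closed_segment c d"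
  assume visible: "mutually_visible (segments C) disj_adj U ?s ?t"
  have st: "?s \<in> segments C" "?t \<in> segments C"
    using assms(1-3) unfolding segments_def by blast+
  obtain h where h: "h \<in> boundary_matching" "h \<inter> ?s = {}" "h \<inter> ?t = {}"
    using boundary_matching_avoids[OF assms(1)] by blast
  have "\<exists>w\<in>segments C - U. disj_adj ?s w \<and> disj_adj w ?t"
  proof (rule mutually_visible_distance_two_iff[of ?s _ h, THEN iffD1, OF st(1) _ st(2)])
    show "h \<in> segments C" using h(1) boundary_matching_subset by blast
    show "disj_adj ?s h" "disj_adj h ?t" using h(2,3) by (auto simp: disj_adj_def)
    show "\<not> disj_adj ?s ?t" using assms(5) by (simp add: disj_adj_def)
  qed (use assms(4) visible in simp_all)
  then obtain w where "w \<in> segments C - U" "w \<inter> ?s = {}" "w \<inter> ?t = {}"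
    by (auto simp: disj_adj_def Int_commute)
  moreover have "{a, b, c, d} \<subseteq> ?s \<union> ?t" by auto
  ultimately show False using assms(6) by blast
qed

lemma crossing_pair_avoiding_edges:
  assumes "card E \<le> 4" "\<And>e. e \<in> E \<Longrightarrow> e \<subseteq> C \<and> card e = 2"
  obtains a b c d where "{a, b, c, d} \<subseteq> C" "a \<noteq> b" "c \<noteq> d" "{a, b} \<noteq> {c, d}"
    "closed_segment a b \<inter> closed_segment c d \<noteq> {}" "{a, b} \<notin> E" "{c, d} \<notin> E"
    "\<And>e. e \<in> E \<Longrightarrow> e \<inter> {a, b, c, d} \<noteq> {}"
proof -
  interpret few_edges C E
    by unfold_locales (use finite_C ten_le_card_C assms in auto)
  from transversal_cases show thesis
  proof
    assume "\<exists>H\<subseteq>C. card H = 4 \<and> independent_transversal E H"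
    then obtain H where H: "H \<subseteq> C" "card H = 4" "independent_transversal E H" by blast
    have "x \<notin> convex hull (H - {x})" if "x \<in> H" for x
      using not_in_convex_hull_others H(1) that by blast
    then obtain x y z w where xyzw: "H = {x, y, z, w}" "distinct [x, y, z, w]"
      "closed_segment x y \<inter> closed_segment z w \<noteq> {}"
      using crossing_segments_of_four_points[OF H(2)] by blast
    have hits: "e \<inter> H \<noteq> {}" and not_inside: "\<not> e \<subseteq> H" if "e \<in> E" for e
      using H(3) that unfolding independent_transversal_def by blast+
    have "{x, y} \<subseteq> H" "{z, w} \<subseteq> H" using xyzw(1) by auto
    then have "{x, y} \<notin> E" "{z, w} \<notin> E" using not_inside by blast+
    moreover have "e \<inter> {x, y, z, w} \<noteq> {}" if "e \<in> E" for e
      using hits[OF that] xyzw(1) by simp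
    moreover have "{x, y} \<noteq> {z, w}" using xyzw(2) by (auto simp: doubleton_eq_iff)
    ultimately show thesis
      using that[of x y z w] H(1) xyzw by simp
  next
    assume "\<exists>p a b. {p, a, b} \<subseteq> C \<and> wedge_transversal E p a b"
    then obtain p a b where pab: "{p, a, b} \<subseteq> C" "wedge_transversal E p a b" by blast
    show thesis
    proof (rule that[of p a p b])
      show "closed_segment p a \<inter> closed_segment p b \<noteq> {}" by auto
    qed (use pab in \<open>auto simp: wedge_transversal_def doubleton_eq_iff\<close>)
  qed
qed

lemma card_mv_set_le:
  assumes mv: "mv_set (segments C) disj_adj U"
  shows "card U + 5 \<le> card (segments C)"
proof (rule ccontr)
  let ?V = "segments C"
  assume too_large: "\<not> ?thesis"
  have finV: "finite ?V" using finite_segments[OF finite_C] .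
  have "U \<subseteq> ?V" using mv by (simp add: mv_set_def)
  then have "card (?V - U) = card ?V - card U" using card_Diff_subset finite_subset finV by blast
  then have "card (?V - U) \<le> 4" using too_large by linarith
  define E where "E = {e. e \<subseteq> C \<and> card e = 2 \<and> convex hull e \<in> ?V - U}"
  have edges: "\<And>e. e \<in> E \<Longrightarrow> e \<subseteq> C \<and> card e = 2" by (simp add: E_def)
  have "inj_on (\<lambda>e. convex hull e) E"
    using inj_on_convex_hull_doubletons by (rule inj_on_subset) (auto simp: E_def)
  moreover have "(\<lambda>e. convex hull e) ` E \<subseteq> ?V - U" by (auto simp: E_def)
  ultimately have "card E \<le> card (?V - U)" by (rule card_inj_on_le) (use finV in simp)
  then have "card E \<le> 4" using \<open>card (?V - U) \<le> 4\<close> by linarith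
  then obtain a b c d where abcd: "{a, b, c, d} \<subseteq> C" "a \<noteq> b" "c \<noteq> d" "{a, b} \<noteq> {c, d}"
    "closed_segment a b \<inter> closed_segment c d \<noteq> {}" "{a, b} \<notin> E" "{c, d} \<notin> E"
    "\<And>e. e \<in> E \<Longrightarrow> e \<inter> {a, b, c, d} \<noteq> {}"
    using crossing_pair_avoiding_edges[OF _ edges] by blast
  have in_U: "closed_segment p q \<in> U" if "p \<in> C" "q \<in> C" "p \<noteq> q" "{p, q} \<notin> E" for p q
  proof (rule ccontr)
    assume "closed_segment p q \<notin> U"
    moreover have "closed_segment p q \<in> ?V" using that(1-3) unfolding segments_def by blast
    ultimately have "{p, q} \<in> E" using that(1-3) by (simp add: E_def segment_convex_hull)
    then show False using that(4) by contradiction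
  qed
  have "closed_segment a b \<noteq> closed_segment c d" using abcd(4) by (simp add: closed_segment_eq)
  moreover have "closed_segment a b \<in> U" "closed_segment c d \<in> U"
    using in_U abcd(1-3,6,7) by auto
  ultimately have "mutually_visible ?V disj_adj U (closed_segment a b) (closed_segment c d)"
    using mv unfolding mv_set_def by blast
  moreover have "w \<inter> {a, b, c, d} \<noteq> {}" if w: "w \<in> ?V - U" for w
  proof -
    obtain e where "e \<subseteq> C" "card e = 2" "w = convex hull e"
      using w unfolding segments_eq_image by blast
    then have "e \<in> E" "e \<subseteq> w" using w hull_subset[of e convex] by (auto simp: E_def)
    then show ?thesis using abcd(8) by blast
  qed
  ultimately show False
    using not_mutually_visible_if_endpoints_block[OF abcd(1-3)] abcd(5)
      \<open>closed_segment a b \<noteq> closed_segment c d\<close> by blast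
qed

end

theorem proposition5:
  fixes C :: "(real^2) set" and n :: nat
  assumes "n \<ge> 10" and "finite C" and "card C = n"
    and "general_position C" and "convex_position C"
  shows "mv_number (segments C) disj_adj = (n choose 2) - 5"
proof -
  interpret large_convex_polygon C
    by unfold_locales (use assms in auto)
  have fin: "finite (segments C)" using finite_segments[OF assms(2)] .
  have card_U0: "card (segments C - boundary_matching) = card (segments C) - 5"
    using card_Diff_subset[OF finite_subset[OF boundary_matching_subset fin] boundary_matching_subset]
      card_boundary_matching by simp
  have "mv_number (segments C) disj_adj = card (segments C - boundary_matching)"
  proof (rule mv_number_eqI[OF fin mv_set_segments_minus_boundary_matching])
    fix U assume "mv_set (segments C) disj_adj U"
    then have "card U + 5 \<le> card (segments C)" by (rule card_mv_set_le)
    then show "card U \<le> card (segments C - boundary_matching)" using card_U0 by linarith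
  qed
  then show ?thesis using card_U0 card_segments[OF assms(2)] assms(3) by simp
qed

end
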